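(* Let $(\Omega,\mathcal F,P)$ be a probability space with filtrations $\mathbb F=(\mathcal F_t)_{t\ge0}\subseteq\mathbb G=(\mathcal G_t)_{t\ge0}$ satisfying the usual conditions, and let $X$ be a positive càdlàg $(P,\mathbb G)$-local martingale. Assume there is a sequence $(\tau_n)_{n\in\mathbb N}$ of $\mathbb F$-stopping times increasing to $\infty$ such that each stopped process $X^{\tau_n}$ is a bounded $(P,\mathbb G)$-martingale. Then for every probability measure $Q\sim P$ such that $X$ is a $(Q,\mathbb G)$-local martingale, the $Q$-optional projection ${}^{o,Q}X$ of $X$ into $\mathbb F$ is a $(Q,\mathbb F)$-local martingale.
   Context: For a probability measure $Q\sim P$, the $Q$-optional projection ${}^{o,Q}X$ of $X$ into $\mathbb F$ is the unique càdlàg $\mathbb F$-optional process with $\mathbf 1_{\{\sigma<\infty\}}\,{}^{o,Q}X_\sigma=\mathbb E^Q[\mathbf 1_{\{\sigma<\infty\}}X_\sigma\mid\mathcal F_\sigma]$ a.s. for every $\mathbb F$-stopping time $\sigma$; in particular ${}^{o,Q}X_t=\mathbb E^Q[X_t\mid\mathcal F_t]$. When $Q=P$ it is written ${}^oX$. *)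

theory Defs
  imports "HOL-Probability.Probability"
begin

text \<open>Continuous time is modelled by the type real, only times t \<ge> 0 matter.
  A filtration is a family of measures (only their sigma-algebras are used)
  indexed by time; stopping times take values in [0,\<infinity>] = ennreal.\<close>

definition is_filtration :: "'a measure \<Rightarrow> (real \<Rightarrow> 'a measure) \<Rightarrow> bool" where
  "is_filtration P F \<longleftrightarrow>
     (\<forall>t\<ge>0. subalgebra P (F t)) \<and>
     (\<forall>s t. 0 \<le> s \<longrightarrow> s \<le> t \<longrightarrow> sets (F s) \<subseteq> sets (F t))"

definition usual_conditions :: "'a measure \<Rightarrow> (real \<Rightarrow> 'a measure) \<Rightarrow> bool" where
  "usual_conditions P F \<longleftrightarrow>
     is_filtration P F \<and>
     (\<forall>t\<ge>0. sets (F t) = (\<Inter>s\<in>{t<..}. sets (F s))) \<and>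
     (\<forall>A\<in>sets P. emeasure P A = 0 \<longrightarrow> (\<forall>B. B \<subseteq> A \<longrightarrow> B \<in> sets (F 0)))"

definition sub_filtration :: "(real \<Rightarrow> 'a measure) \<Rightarrow> (real \<Rightarrow> 'a measure) \<Rightarrow> bool" where
  "sub_filtration F G \<longleftrightarrow> (\<forall>t\<ge>0. sets (F t) \<subseteq> sets (G t))"

definition equiv_measure :: "'a measure \<Rightarrow> 'a measure \<Rightarrow> bool" where
  "equiv_measure Q P \<longleftrightarrow> prob_space Q \<and> space Q = space P \<and> sets Q = sets P \<and>
     (\<forall>A\<in>sets P. emeasure Q A = 0 \<longleftrightarrow> emeasure P A = 0)"

definition is_stopping_time :: "(real \<Rightarrow> 'a measure) \<Rightarrow> ('a \<Rightarrow> ennreal) \<Rightarrow> bool" where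
  "is_stopping_time F \<sigma> \<longleftrightarrow>
     (\<forall>t\<ge>0. {\<omega> \<in> space (F t). \<sigma> \<omega> \<le> ennreal t} \<in> sets (F t))"

definition stopped :: "('a \<Rightarrow> ennreal) \<Rightarrow> (real \<Rightarrow> 'a \<Rightarrow> real) \<Rightarrow> real \<Rightarrow> 'a \<Rightarrow> real" where
  "stopped \<sigma> Y t \<omega> = (if ennreal t \<le> \<sigma> \<omega> then Y t \<omega> else Y (enn2real (\<sigma> \<omega>)) \<omega>)"

definition cadlag :: "'a measure \<Rightarrow> (real \<Rightarrow> 'a \<Rightarrow> real) \<Rightarrow> bool" where
  "cadlag P Y \<longleftrightarrow> (\<forall>\<omega>\<in>space P. \<forall>t\<ge>0.
      continuous (at_right t) (\<lambda>s. Y s \<omega>) \<and>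
      (t > 0 \<longrightarrow> (\<exists>l. ((\<lambda>s. Y s \<omega>) \<longlongrightarrow> l) (at_left t))))"

definition adapted :: "(real \<Rightarrow> 'a measure) \<Rightarrow> (real \<Rightarrow> 'a \<Rightarrow> real) \<Rightarrow> bool" where
  "adapted F Y \<longleftrightarrow> (\<forall>t\<ge>0. Y t \<in> borel_measurable (F t))"

definition martingale :: "'a measure \<Rightarrow> (real \<Rightarrow> 'a measure) \<Rightarrow> (real \<Rightarrow> 'a \<Rightarrow> real) \<Rightarrow> bool" where
  "martingale Q H Y \<longleftrightarrow> adapted H Y \<and> (\<forall>t\<ge>0. integrable Q (Y t)) \<and>
     (\<forall>s t. 0 \<le> s \<longrightarrow> s \<le> t \<longrightarrow> (AE \<omega> in Q. real_cond_exp Q (H s) (Y t) \<omega> = Y s \<omega>))"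

definition localizing_seq :: "'a measure \<Rightarrow> (real \<Rightarrow> 'a measure) \<Rightarrow> (nat \<Rightarrow> 'a \<Rightarrow> ennreal) \<Rightarrow> bool" where
  "localizing_seq Q H \<tau> \<longleftrightarrow> (\<forall>n. is_stopping_time H (\<tau> n)) \<and>
     (AE \<omega> in Q. mono (\<lambda>n. \<tau> n \<omega>) \<and> (\<lambda>n. \<tau> n \<omega>) \<longlonglongrightarrow> \<infinity>)"

definition local_martingale :: "'a measure \<Rightarrow> (real \<Rightarrow> 'a measure) \<Rightarrow> (real \<Rightarrow> 'a \<Rightarrow> real) \<Rightarrow> bool" where
  "local_martingale Q H Y \<longleftrightarrow> cadlag Q Y \<and> adapted H Y \<and>
     (\<exists>\<sigma>. localizing_seq Q H \<sigma> \<and> (\<forall>n. martingale Q H (stopped (\<sigma> n) Y)))"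

definition bounded_process :: "'a measure \<Rightarrow> (real \<Rightarrow> 'a \<Rightarrow> real) \<Rightarrow> bool" where
  "bounded_process P Y \<longleftrightarrow> (\<exists>C. \<forall>t\<ge>0. \<forall>\<omega>\<in>space P. \<bar>Y t \<omega>\<bar> \<le> C)"

definition F_infty :: "'a measure \<Rightarrow> (real \<Rightarrow> 'a measure) \<Rightarrow> 'a set set" where
  "F_infty P F = sigma_sets (space P) (\<Union>t\<in>{0..}. sets (F t))"

definition F_at :: "'a measure \<Rightarrow> (real \<Rightarrow> 'a measure) \<Rightarrow> ('a \<Rightarrow> ennreal) \<Rightarrow> 'a measure" where
  "F_at P F \<sigma> = sigma (space P)
     {A \<in> F_infty P F. \<forall>t\<ge>0. {\<omega>\<in>A. \<sigma> \<omega> \<le> ennreal t} \<in> sets (F t)}"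

definition value_at :: "(real \<Rightarrow> 'a \<Rightarrow> real) \<Rightarrow> ('a \<Rightarrow> ennreal) \<Rightarrow> 'a \<Rightarrow> real" where
  "value_at Y \<sigma> \<omega> = (if \<sigma> \<omega> < \<infinity> then Y (enn2real (\<sigma> \<omega>)) \<omega> else 0)"

text \<open>Optional sigma-algebra on [0,\<infinity>) \<times> \<Omega>, generated by the stochastic
  intervals [[\<sigma>,\<infinity>[[ of F-stopping times.\<close>
definition optional_sets :: "'a measure \<Rightarrow> (real \<Rightarrow> 'a measure) \<Rightarrow> (real \<times> 'a) set set" where
  "optional_sets P F = sigma_sets ({0..} \<times> space P)
     {{(t, \<omega>). 0 \<le> t \<and> \<omega> \<in> space P \<and> \<sigma> \<omega> \<le> ennreal t} | \<sigma>. is_stopping_time F \<sigma>}"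

definition optional :: "'a measure \<Rightarrow> (real \<Rightarrow> 'a measure) \<Rightarrow> (real \<Rightarrow> 'a \<Rightarrow> real) \<Rightarrow> bool" where
  "optional P F Y \<longleftrightarrow> (\<forall>B\<in>sets borel.
     {(t, \<omega>). 0 \<le> t \<and> \<omega> \<in> space P \<and> Y t \<omega> \<in> B} \<in> optional_sets P F)"

definition optional_projection ::
  "'a measure \<Rightarrow> (real \<Rightarrow> 'a measure) \<Rightarrow> (real \<Rightarrow> 'a \<Rightarrow> real) \<Rightarrow> (real \<Rightarrow> 'a \<Rightarrow> real) \<Rightarrow> bool" where
  "optional_projection Q F X Y \<longleftrightarrow> cadlag Q Y \<and> optional Q F Y \<and>
     (\<forall>\<sigma>. is_stopping_time F \<sigma> \<longrightarrow>
        (AE \<omega> in Q. value_at Y \<sigma> \<omega> = real_cond_exp Q (F_at Q F \<sigma>) (value_at X \<sigma>) \<omega>))"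

end

theory Submission
  imports Defs
begin

text \<open>Under Q the positive process X has a localizing sequence \<sigma>_k; each X^{\<sigma>_k} is a
  positive right-continuous (Q,G)-martingale, so optional stopping at the bounded times
  \<tau>_n \<and> t makes X^{\<sigma>_k \<and> \<tau>_n} a (Q,G)-martingale, and since X^{\<tau>_n} is bounded, dominated
  convergence in k shows that X^{\<tau>_n} itself is a (Q,G)-martingale. Because \<tau>_n is an
  F-stopping time, the projection stopped at \<tau>_n is E^Q[X^{\<tau>_n}_t | F_{\<tau>_n \<and> t}], and the
  tower property makes it a (Q,F)-martingale: \<tau>_n localizes the projection.\<close>

section \<open>Stopped processes\<close>

lemma enn2real_min_ennreal_le_iff:
  assumes "0 \<le> u" "0 \<le> v"
  shows "enn2real (min x (ennreal u)) \<le> v \<longleftrightarrow> min x (ennreal u) \<le> ennreal v"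
  using assms by (cases x rule: ennreal_cases) (auto simp: min_def ennreal_le_iff top_unique)

lemma enn2real_min_ennreal_le: "0 \<le> u \<Longrightarrow> enn2real (min x (ennreal u)) \<le> u"
  using enn2real_min_ennreal_le_iff[of u u x] by simp

lemma stopped_eq_min:
  "0 \<le> u \<Longrightarrow> stopped \<tau> Y u \<omega> = Y (enn2real (min (\<tau> \<omega>) (ennreal u))) \<omega>"
  by (auto simp: stopped_def min_def)

lemma stopped_eq_stopped_after_stop:
  assumes "\<tau> \<omega> \<le> ennreal s" "0 \<le> s" "s \<le> t"
  shows "stopped \<tau> Y t \<omega> = stopped \<tau> Y s \<omega>"
proof -
  have "\<tau> \<omega> \<le> ennreal t" using assms by (meson ennreal_leI order_trans)
  then show ?thesis using assms by (simp add: stopped_eq_min min_absorb1)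
qed

lemma stopped_stopped_commute:
  "0 \<le> u \<Longrightarrow> stopped \<tau> (stopped \<sigma> X) u \<omega> = stopped \<sigma> (stopped \<tau> X) u \<omega>"
  by (simp add: stopped_eq_min min.strict_coboundedI2 min.left_commute)

lemma value_at_min_ennreal:
  "0 \<le> u \<Longrightarrow> value_at Y (\<lambda>\<omega>. min (\<tau> \<omega>) (ennreal u)) = stopped \<tau> Y u"
  by (rule ext) (simp add: value_at_def stopped_eq_min min.strict_coboundedI2)

lemma value_at_ennreal: "0 \<le> u \<Longrightarrow> value_at Y (\<lambda>_. ennreal u) = Y u"
  by (rule ext) (simp add: value_at_def)

lemma continuous_at_right_stopped:
  assumes rc: "\<And>u. 0 \<le> u \<Longrightarrow> continuous (at_right u) (\<lambda>s. X s \<omega>)" and u0: "0 \<le> u"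
  shows "continuous (at_right u) (\<lambda>s. stopped \<sigma> X s \<omega>)"
proof (cases "ennreal u < \<sigma> \<omega>")
  case True
  obtain b where b: "u < b" and bb: "\<And>s. s < b \<Longrightarrow> ennreal s \<le> \<sigma> \<omega>"
  proof (cases "\<sigma> \<omega> = \<infinity>")
    case True
    then show ?thesis using that[of "u + 1"] by auto
  next
    case False
    then obtain r where r: "\<sigma> \<omega> = ennreal r" "0 \<le> r" by (cases "\<sigma> \<omega>" rule: ennreal_cases) auto
    then have "u < r" using \<open>ennreal u < \<sigma> \<omega>\<close> u0 by (simp add: ennreal_less_iff)
    then show ?thesis using r by (intro that[of r]) (auto intro: ennreal_leI)
  qed
  have ev: "\<forall>\<^sub>F s in at_right u. X s \<omega> = stopped \<sigma> X s \<omega>"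
    unfolding eventually_at_right_field using b bb by (auto simp: stopped_def intro!: exI[of _ b])
  have "stopped \<sigma> X u \<omega> = X u \<omega>" using less_imp_le[OF True] by (simp add: stopped_def)
  moreover have "((\<lambda>s. X s \<omega>) \<longlongrightarrow> X u \<omega>) (at_right u)" using rc[OF u0] by (simp add: continuous_within)
  ultimately have "((\<lambda>s. stopped \<sigma> X s \<omega>) \<longlongrightarrow> stopped \<sigma> X u \<omega>) (at_right u)"
    using ev by (simp add: Lim_transform_eventually)
  then show ?thesis by (simp add: continuous_within)
next
  case False
  then have stop_le: "\<sigma> \<omega> \<le> ennreal u" by simp
  have "\<forall>\<^sub>F s in at_right u. stopped \<sigma> X u \<omega> = stopped \<sigma> X s \<omega>"
    unfolding eventually_at_right_field
    by (rule exI[of _ "u + 1"]) (auto intro!: stopped_eq_stopped_after_stop[of \<sigma> \<omega> u, OF stop_le u0, symmetric])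
  then show ?thesis
    unfolding continuous_within by (rule Lim_transform_eventually[OF tendsto_const])
qed

section \<open>Dyadic approximation from above\<close>

definition dyadic_index :: "nat \<Rightarrow> real \<Rightarrow> nat" where
  "dyadic_index j x = nat \<lfloor>2^j * x\<rfloor> + 1"

lemma dyadic_index_bounds:
  assumes "0 \<le> x"
  shows "x < real (dyadic_index j x) / 2^j" "real (dyadic_index j x) / 2^j \<le> x + 1 / 2^j"
proof -
  have "real (nat \<lfloor>2^j * x\<rfloor>) = of_int \<lfloor>2^j * x\<rfloor>" using assms by simp
  moreover have "2^j * x < of_int \<lfloor>2^j * x\<rfloor> + 1" "of_int \<lfloor>2^j * x\<rfloor> \<le> 2^j * x" by linarith+
  ultimately show "x < real (dyadic_index j x) / 2^j" "real (dyadic_index j x) / 2^j \<le> x + 1 / 2^j"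
    unfolding dyadic_index_def by (simp_all add: field_simps)
qed

lemma dyadic_index_eq_iff:
  assumes "0 \<le> x" "1 \<le> k"
  shows "dyadic_index j x = k \<longleftrightarrow> x < real k / 2^j \<and> \<not> x < (real k - 1) / 2^j"
proof -
  have "dyadic_index j x = k \<longleftrightarrow> \<lfloor>2^j * x\<rfloor> = int k - 1"
    unfolding dyadic_index_def using assms by (auto simp: nat_eq_iff)
  also have "\<dots> \<longleftrightarrow> real k - 1 \<le> 2^j * x \<and> 2^j * x < real k"
    by (simp add: floor_eq_iff)
  also have "\<dots> \<longleftrightarrow> x < real k / 2^j \<and> \<not> x < (real k - 1) / 2^j"
    by (auto simp: field_simps)
  finally show ?thesis .
qed

lemma dyadic_index_mono: "0 \<le> x \<Longrightarrow> x \<le> y \<Longrightarrow> dyadic_index j x \<le> dyadic_index j y"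
  unfolding dyadic_index_def by (simp add: floor_mono nat_mono)

definition dyadic_upper :: "real \<Rightarrow> nat \<Rightarrow> real \<Rightarrow> real" where
  "dyadic_upper t j x = min t (real (dyadic_index j x) / 2^j)"

lemma dyadic_upper_bounds:
  assumes "0 \<le> x" "x \<le> t"
  shows "x \<le> dyadic_upper t j x" "dyadic_upper t j x \<le> x + 1 / 2^j" "dyadic_upper t j x \<le> t"
  using dyadic_index_bounds[of x j] assms unfolding dyadic_upper_def by auto

lemma tendsto_dyadic_upper:
  fixes f :: "real \<Rightarrow> 'a::metric_space"
  assumes rc: "continuous (at_right x) f" and "0 \<le> x" "x \<le> t"
  shows "(\<lambda>j. f (dyadic_upper t j x)) \<longlonglongrightarrow> f x"
proof (rule tendstoI)
  fix e :: real assume "0 < e"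
  with rc obtain b where "x < b" and b: "\<And>y. x < y \<Longrightarrow> y < b \<Longrightarrow> dist (f y) (f x) < e"
    unfolding continuous_within by (auto dest!: tendstoD simp: eventually_at_right_field)
  then obtain J where J: "(1/2::real) ^ J < b - x"
    using real_arch_pow_inv[of "b - x" "1/2::real"] by auto
  show "\<forall>\<^sub>F j in sequentially. dist (f (dyadic_upper t j x)) (f x) < e"
  proof (rule eventually_sequentiallyI[of J])
    fix j assume "J \<le> j"
    then have "(1/2::real) ^ j \<le> (1/2) ^ J" by (intro power_decreasing) auto
    then have "dyadic_upper t j x < b"
      using dyadic_upper_bounds(2)[OF assms(2,3), of j] J by (simp add: power_one_over)
    then show "dist (f (dyadic_upper t j x)) (f x) < e"
      using b \<open>0 < e\<close> dyadic_upper_bounds(1)[OF assms(2,3), of j]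
      by (cases "x = dyadic_upper t j x") auto
  qed
qed

section \<open>Convergence of integrals\<close>

lemma (in finite_measure) tendsto_integral_pos_part_minus_nat:
  assumes "integrable M f"
  shows "(\<lambda>m. \<integral>\<omega>. max (f \<omega> - real m) 0 \<partial>M) \<longlonglongrightarrow> 0"
proof -
  have "(\<lambda>m. \<integral>\<omega>. max (f \<omega> - real m) 0 \<partial>M) \<longlonglongrightarrow> (\<integral>\<omega>. 0 \<partial>M)"
  proof (rule integral_dominated_convergence[where w="\<lambda>\<omega>. norm (f \<omega>)"])
    show "(\<lambda>\<omega>. max (f \<omega> - real m) 0) \<in> borel_measurable M" for m
      using assms by measurable
    show "AE \<omega> in M. (\<lambda>m. max (f \<omega> - real m) 0) \<longlonglongrightarrow> 0"
    proof (intro AE_I2)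
      fix \<omega>
      obtain m0 where "f \<omega> \<le> real m0" using real_arch_simple by blast
      then have "\<forall>m\<ge>m0. max (f \<omega> - real m) 0 = 0" by (auto simp: max_def)
      then show "(\<lambda>m. max (f \<omega> - real m) 0) \<longlonglongrightarrow> 0"
        by (intro tendsto_eventually) (auto simp: eventually_sequentially)
    qed
  qed (use assms in auto)
  then show ?thesis by simp
qed

lemma (in finite_measure) integral_eq_of_tendsto_integral_min_nat:
  fixes l :: "'a \<Rightarrow> real"
  assumes l_meas: "l \<in> borel_measurable M" and int: "\<And>m. integrable M (\<lambda>\<omega>. min (l \<omega>) (real m))"
    and ilim: "(\<lambda>m. \<integral>\<omega>. min (l \<omega>) (real m) \<partial>M) \<longlonglongrightarrow> c"
  shows "integrable M l" "integral\<^sup>L M l = c"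
proof -
  have lim: "AE \<omega> in M. (\<lambda>m. min (l \<omega>) (real m)) \<longlonglongrightarrow> l \<omega>"
  proof (intro AE_I2)
    fix \<omega>
    obtain m0 where "l \<omega> \<le> real m0" using real_arch_simple by blast
    then have "\<forall>m\<ge>m0. min (l \<omega>) (real m) = l \<omega>" by (auto simp: min_def)
    then show "(\<lambda>m. min (l \<omega>) (real m)) \<longlonglongrightarrow> l \<omega>"
      by (intro tendsto_eventually) (auto simp: eventually_sequentially)
  qed
  have mono: "AE \<omega> in M. mono (\<lambda>m. min (l \<omega>) (real m))"
    by (intro AE_I2) (auto simp: mono_def)
  show "integrable M l" "integral\<^sup>L M l = c"
    using integrable_monotone_convergence[OF int mono lim ilim l_meas]
      integral_monotone_convergence[OF int mono lim ilim l_meas] by auto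
qed

lemma (in finite_measure) tendsto_integral_min_const:
  fixes g :: "nat \<Rightarrow> 'a \<Rightarrow> real"
  assumes g_meas: "\<And>j. g j \<in> borel_measurable M" and l_meas: "l \<in> borel_measurable M"
    and g_nonneg: "\<And>j \<omega>. \<omega> \<in> space M \<Longrightarrow> 0 \<le> g j \<omega>"
    and g_lim: "\<And>\<omega>. \<omega> \<in> space M \<Longrightarrow> (\<lambda>j. g j \<omega>) \<longlonglongrightarrow> l \<omega>" and "0 \<le> K"
  shows "integrable M (\<lambda>\<omega>. min (l \<omega>) K)"
    "(\<lambda>j. \<integral>\<omega>. min (g j \<omega>) K \<partial>M) \<longlonglongrightarrow> (\<integral>\<omega>. min (l \<omega>) K \<partial>M)"
proof -
  have lim: "AE \<omega> in M. (\<lambda>j. min (g j \<omega>) K) \<longlonglongrightarrow> min (l \<omega>) K"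
    by (intro AE_I2 tendsto_min g_lim tendsto_const)
  have bound: "AE \<omega> in M. norm (min (g j \<omega>) K) \<le> K" for j
    using g_nonneg \<open>0 \<le> K\<close> by (intro AE_I2) auto
  have meas: "(\<lambda>\<omega>. min (g j \<omega>) K) \<in> borel_measurable M" for j
    using g_meas[of j] by measurable
  have meas_lim: "(\<lambda>\<omega>. min (l \<omega>) K) \<in> borel_measurable M"
    using l_meas by measurable
  show "integrable M (\<lambda>\<omega>. min (l \<omega>) K)"
    by (rule integrable_dominated_convergence[OF meas_lim meas integrable_const lim bound])
  show "(\<lambda>j. \<integral>\<omega>. min (g j \<omega>) K \<partial>M) \<longlonglongrightarrow> (\<integral>\<omega>. min (l \<omega>) K \<partial>M)"
    by (rule integral_dominated_convergence[OF meas_lim meas integrable_const lim bound])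
qed

text \<open>A Vitali-type statement: uniformly small tails prevent mass from escaping in the limit.\<close>

lemma (in finite_measure) integral_eq_of_tendsto_uniform_tails:
  fixes g :: "nat \<Rightarrow> 'a \<Rightarrow> real"
  assumes g_int: "\<And>j. integrable M (g j)"
    and g_nonneg: "\<And>j \<omega>. \<omega> \<in> space M \<Longrightarrow> 0 \<le> g j \<omega>"
    and g_lim: "\<And>\<omega>. \<omega> \<in> space M \<Longrightarrow> (\<lambda>j. g j \<omega>) \<longlonglongrightarrow> l \<omega>"
    and g_integral: "\<And>j. integral\<^sup>L M (g j) = c"
    and tails: "\<And>j K. 0 \<le> K \<Longrightarrow> (\<integral>\<omega>. max (g j \<omega> - K) 0 \<partial>M) \<le> e K"
    and tails_lim: "(\<lambda>m. e (real m)) \<longlonglongrightarrow> 0"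
  shows "integrable M l" "integral\<^sup>L M l = c"
proof -
  have g_meas: "g j \<in> borel_measurable M" for j using g_int by auto
  have l_meas: "l \<in> borel_measurable M"
    by (rule borel_measurable_LIMSEQ_real[OF g_lim g_meas])
  have trunc_int: "integrable M (\<lambda>\<omega>. min (l \<omega>) K)" if "0 \<le> K" for K
    using g_meas l_meas g_nonneg g_lim that by (rule tendsto_integral_min_const(1))
  have trunc_lim: "(\<lambda>j. \<integral>\<omega>. min (g j \<omega>) K \<partial>M) \<longlonglongrightarrow> (\<integral>\<omega>. min (l \<omega>) K \<partial>M)"
    if "0 \<le> K" for K
    using g_meas l_meas g_nonneg g_lim that by (rule tendsto_integral_min_const(2))
  have trunc_bounds: "c - e K \<le> (\<integral>\<omega>. min (l \<omega>) K \<partial>M) \<and> (\<integral>\<omega>. min (l \<omega>) K \<partial>M) \<le> c"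
    if "0 \<le> K" for K
  proof -
    have "c - e K \<le> (\<integral>\<omega>. min (g j \<omega>) K \<partial>M) \<and> (\<integral>\<omega>. min (g j \<omega>) K \<partial>M) \<le> c" for j
    proof -
      have "c = (\<integral>\<omega>. min (g j \<omega>) K + max (g j \<omega> - K) 0 \<partial>M)"
        unfolding g_integral[of j, symmetric] by (rule Bochner_Integration.integral_cong) auto
      also have "\<dots> = (\<integral>\<omega>. min (g j \<omega>) K \<partial>M) + (\<integral>\<omega>. max (g j \<omega> - K) 0 \<partial>M)"
        using g_int[of j] by (intro Bochner_Integration.integral_add) auto
      finally show ?thesis
        using tails[OF that, of j] integral_nonneg_AE[of "\<lambda>\<omega>. max (g j \<omega> - K) 0" M] by auto
    qed
    then show ?thesis
      using trunc_lim[OF that] by (auto intro: LIMSEQ_le_const LIMSEQ_le_const2)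
  qed
  have "(\<lambda>m. \<integral>\<omega>. min (l \<omega>) (real m) \<partial>M) \<longlonglongrightarrow> c"
  proof (rule real_tendsto_sandwich)
    show "(\<lambda>m. c - e (real m)) \<longlonglongrightarrow> c"
      using tendsto_diff[OF tendsto_const tails_lim] by simp
  qed (use trunc_bounds in auto)
  then show "integrable M l" "integral\<^sup>L M l = c"
    using integral_eq_of_tendsto_integral_min_nat[OF l_meas trunc_int] by auto
qed

lemma integral_indicator_eq_of_eq_on_inter:
  fixes f g :: "'a \<Rightarrow> real"
  assumes "integrable M f" "integrable M g" "A \<in> sets M" "S \<in> sets M"
    and eq_on: "\<And>\<omega>. \<omega> \<in> A \<inter> S \<Longrightarrow> f \<omega> = g \<omega>"
    and eq_off: "(\<integral>\<omega>. indicator (A - S) \<omega> * f \<omega> \<partial>M) = (\<integral>\<omega>. indicator (A - S) \<omega> * g \<omega> \<partial>M)"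
  shows "(\<integral>\<omega>. indicator A \<omega> * f \<omega> \<partial>M) = (\<integral>\<omega>. indicator A \<omega> * g \<omega> \<partial>M)"
proof -
  have split: "indicator A \<omega> * h \<omega> = indicator (A - S) \<omega> * h \<omega> + indicator (A \<inter> S) \<omega> * h \<omega>"
    for h :: "'a \<Rightarrow> real" and \<omega>
    by (auto split: split_indicator)
  have int: "integrable M (\<lambda>\<omega>. indicator B \<omega> * h \<omega>)" if "B \<in> sets M" "integrable M h"
    for B and h :: "'a \<Rightarrow> real"
    using integrable_mult_indicator[OF that] by simp
  have int_split: "(\<integral>\<omega>. indicator A \<omega> * h \<omega> \<partial>M)
      = (\<integral>\<omega>. indicator (A - S) \<omega> * h \<omega> \<partial>M) + (\<integral>\<omega>. indicator (A \<inter> S) \<omega> * h \<omega> \<partial>M)"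
    if "integrable M h" for h :: "'a \<Rightarrow> real"
    unfolding split using assms(3,4) that by (intro Bochner_Integration.integral_add int) auto
  have "(\<integral>\<omega>. indicator (A \<inter> S) \<omega> * f \<omega> \<partial>M) = (\<integral>\<omega>. indicator (A \<inter> S) \<omega> * g \<omega> \<partial>M)"
    using eq_on by (intro Bochner_Integration.integral_cong) (auto split: split_indicator)
  then show ?thesis
    using eq_off int_split[OF assms(1)] int_split[OF assms(2)] by simp
qed

lemma (in finite_measure) tendsto_integral_stopped_bounded:
  assumes bound: "\<And>t \<omega>. 0 \<le> t \<Longrightarrow> \<omega> \<in> space M \<Longrightarrow> \<bar>Y t \<omega>\<bar> \<le> C" and "0 \<le> u"
    and meas: "\<And>k. stopped (\<sigma> k) Y u \<in> borel_measurable M" "Y u \<in> borel_measurable M"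
    and A: "A \<in> sets M" and to_infty: "AE \<omega> in M. (\<lambda>k. \<sigma> k \<omega>) \<longlonglongrightarrow> \<infinity>"
  shows "(\<lambda>k. \<integral>\<omega>. indicator A \<omega> * stopped (\<sigma> k) Y u \<omega> \<partial>M) \<longlonglongrightarrow> (\<integral>\<omega>. indicator A \<omega> * Y u \<omega> \<partial>M)"
proof (rule integral_dominated_convergence[where w="\<lambda>_. C"])
  show "(\<lambda>\<omega>. indicator A \<omega> * Y u \<omega>) \<in> borel_measurable M"
    "(\<lambda>\<omega>. indicator A \<omega> * stopped (\<sigma> k) Y u \<omega>) \<in> borel_measurable M" for k
    using meas A by measurable
  show "AE \<omega> in M. (\<lambda>k. indicator A \<omega> * stopped (\<sigma> k) Y u \<omega>) \<longlonglongrightarrow> indicator A \<omega> * Y u \<omega>"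
    using to_infty
  proof (rule AE_mp, intro AE_I2 impI)
    fix \<omega> assume "(\<lambda>k. \<sigma> k \<omega>) \<longlonglongrightarrow> \<infinity>"
    then have "\<forall>\<^sub>F k in sequentially. ennreal u < \<sigma> k \<omega>"
      by (rule order_tendstoD(1)) simp
    then have "\<forall>\<^sub>F k in sequentially. indicator A \<omega> * Y u \<omega> = indicator A \<omega> * stopped (\<sigma> k) Y u \<omega>"
      by eventually_elim (simp add: stopped_def less_imp_le)
    then show "(\<lambda>k. indicator A \<omega> * stopped (\<sigma> k) Y u \<omega>) \<longlonglongrightarrow> indicator A \<omega> * Y u \<omega>"
      by (rule Lim_transform_eventually[OF tendsto_const])
  qed
  show "AE \<omega> in M. norm (indicator A \<omega> * stopped (\<sigma> k) Y u \<omega>) \<le> C" for k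
  proof (intro AE_I2)
    fix \<omega> assume "\<omega> \<in> space M"
    then have "\<bar>stopped (\<sigma> k) Y u \<omega>\<bar> \<le> C"
      using bound \<open>0 \<le> u\<close> by (simp add: stopped_eq_min)
    then show "norm (indicator A \<omega> * stopped (\<sigma> k) Y u \<omega>) \<le> C"
      by (auto split: split_indicator)
  qed
qed simp

lemma (in prob_space) AE_eq_real_cond_exp_set_integral:
  assumes H: "subalgebra M H" and f: "integrable M f" and g: "g \<in> borel_measurable M"
    and g_eq: "AE \<omega> in M. g \<omega> = real_cond_exp M H f \<omega>"
  shows "integrable M g"
    "B \<in> sets H \<Longrightarrow> (\<integral>\<omega>. indicator B \<omega> * g \<omega> \<partial>M) = (\<integral>\<omega>. indicator B \<omega> * f \<omega> \<partial>M)"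
proof -
  interpret finite_measure_subalgebra M H
    by (intro finite_measure_subalgebra.intro finite_measure_subalgebra_axioms.intro
        finite_measure_axioms H)
  show "integrable M g"
    using real_cond_exp_int(1)[OF f] g g_eq by (subst integrable_cong_AE) auto
  assume B: "B \<in> sets H"
  then have [measurable]: "B \<in> sets M" using H unfolding subalgebra_def by blast
  have "(\<integral>\<omega>. indicator B \<omega> * g \<omega> \<partial>M) = (\<integral>\<omega>\<in>B. real_cond_exp M H f \<omega> \<partial>M)"
    unfolding set_lebesgue_integral_def using g g_eq by (intro integral_cong_AE) auto
  also have "\<dots> = (\<integral>\<omega>\<in>B. f \<omega> \<partial>M)"
    by (rule real_cond_exp_intA[OF f B, symmetric])
  finally show "(\<integral>\<omega>. indicator B \<omega> * g \<omega> \<partial>M) = (\<integral>\<omega>. indicator B \<omega> * f \<omega> \<partial>M)"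
    by (simp add: set_lebesgue_integral_def)
qed

section \<open>Martingales on a filtered probability space\<close>

locale filtered_prob_space = prob_space Q for Q :: "'a measure" +
  fixes F :: "real \<Rightarrow> 'a measure"
  assumes filtration: "is_filtration Q F"
begin

lemma subalgebra_filtration: "0 \<le> t \<Longrightarrow> subalgebra Q (F t)"
  using filtration unfolding is_filtration_def by blast

lemma sets_filtration_mono: "0 \<le> s \<Longrightarrow> s \<le> t \<Longrightarrow> sets (F s) \<subseteq> sets (F t)"
  using filtration unfolding is_filtration_def by blast

lemma sets_filtration_into_sets: "0 \<le> t \<Longrightarrow> A \<in> sets (F t) \<Longrightarrow> A \<in> sets Q"
  using subalgebra_filtration unfolding subalgebra_def by blast

lemma space_filtration: "0 \<le> t \<Longrightarrow> space (F t) = space Q"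
  using subalgebra_filtration unfolding subalgebra_def by blast

lemma martingale_set_integral:
  assumes "martingale Q F Y" "0 \<le> s" "s \<le> t" "A \<in> sets (F s)"
  shows "(\<integral>x. indicator A x * Y t x \<partial>Q) = (\<integral>x. indicator A x * Y s x \<partial>Q)"
proof -
  interpret finite_measure_subalgebra Q "F s"
    by (intro finite_measure_subalgebra.intro finite_measure_subalgebra_axioms.intro
        finite_measure_axioms subalgebra_filtration assms(2))
  have Yt: "integrable Q (Y t)" and Ys: "Y s \<in> borel_measurable (F s)"
    and cond_exp: "AE x in Q. real_cond_exp Q (F s) (Y t) x = Y s x"
    using assms unfolding martingale_def adapted_def by auto
  have [measurable]: "Y s \<in> borel_measurable Q" by (rule measurable_from_subalg[OF subalg Ys])
  have [measurable]: "A \<in> sets Q" using assms(2,4) by (rule sets_filtration_into_sets)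
  have "(\<integral>x\<in>A. Y t x \<partial>Q) = (\<integral>x\<in>A. real_cond_exp Q (F s) (Y t) x \<partial>Q)"
    by (rule real_cond_exp_intA[OF Yt assms(4)])
  also have "\<dots> = (\<integral>x\<in>A. Y s x \<partial>Q)"
    unfolding set_lebesgue_integral_def using cond_exp by (intro integral_cong_AE) auto
  finally show ?thesis by (simp add: set_lebesgue_integral_def)
qed

lemma martingaleI_set_integral:
  assumes "adapted F Y" and "\<And>t. 0 \<le> t \<Longrightarrow> integrable Q (Y t)"
    and "\<And>s t A. 0 \<le> s \<Longrightarrow> s \<le> t \<Longrightarrow> A \<in> sets (F s) \<Longrightarrow>
           (\<integral>x. indicator A x * Y t x \<partial>Q) = (\<integral>x. indicator A x * Y s x \<partial>Q)"
  shows "martingale Q F Y"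
  unfolding martingale_def
proof (intro conjI allI impI assms)
  fix s t :: real assume "0 \<le> s" "s \<le> t"
  interpret finite_measure_subalgebra Q "F s"
    by (intro finite_measure_subalgebra.intro finite_measure_subalgebra_axioms.intro
        finite_measure_axioms subalgebra_filtration \<open>0 \<le> s\<close>)
  show "AE x in Q. real_cond_exp Q (F s) (Y t) x = Y s x"
  proof (rule real_cond_exp_charact)
    fix A assume "A \<in> sets (F s)"
    then show "(\<integral>x\<in>A. Y t x \<partial>Q) = (\<integral>x\<in>A. Y s x \<partial>Q)"
      using assms(3)[OF \<open>0 \<le> s\<close> \<open>s \<le> t\<close>] by (simp add: set_lebesgue_integral_def)
  next
    show "integrable Q (Y t)" "integrable Q (Y s)"
      using assms(2) \<open>0 \<le> s\<close> \<open>s \<le> t\<close> by simp_all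
    show "Y s \<in> borel_measurable (F s)"
      using assms(1) \<open>0 \<le> s\<close> unfolding adapted_def by blast
  qed
qed

lemma stopping_time_le_sets:
  "is_stopping_time F \<tau> \<Longrightarrow> 0 \<le> t \<Longrightarrow> {\<omega>\<in>space Q. \<tau> \<omega> \<le> ennreal t} \<in> sets (F t)"
  using space_filtration unfolding is_stopping_time_def by metis

lemma stopping_time_min_le_sets:
  assumes "is_stopping_time F \<tau>" "0 \<le> u" "0 \<le> v"
  shows "{\<omega>\<in>space Q. min (\<tau> \<omega>) (ennreal u) \<le> ennreal v} \<in> sets (F v)"
proof (cases "u \<le> v")
  case True
  then have "{\<omega>\<in>space Q. min (\<tau> \<omega>) (ennreal u) \<le> ennreal v} = space (F v)"
    using space_filtration[OF assms(3)] by (auto simp: min_le_iff_disj ennreal_leI)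
  then show ?thesis by simp
next
  case False
  then have "{\<omega>\<in>space Q. min (\<tau> \<omega>) (ennreal u) \<le> ennreal v} = {\<omega>\<in>space Q. \<tau> \<omega> \<le> ennreal v}"
    using assms(2,3) by (auto simp: min_le_iff_disj ennreal_le_iff)
  then show ?thesis using stopping_time_le_sets[OF assms(1,3)] by simp
qed

text \<open>That is, A \<inter> {\<tau> > s} satisfies the defining condition of F_{\<tau> \<and> u}.\<close>

lemma stopping_time_after_sets:
  assumes "is_stopping_time F \<tau>" "0 \<le> s" "s \<le> u" "A \<in> sets (F s)" "0 \<le> v"
  shows "{\<omega> \<in> A - {\<omega>. \<tau> \<omega> \<le> ennreal s}. min (\<tau> \<omega>) (ennreal u) \<le> ennreal v} \<in> sets (F v)"
proof (cases "s \<le> v")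
  case True
  have A_space: "A \<subseteq> space Q"
    using sets.sets_into_space[OF sets_filtration_into_sets[OF assms(2,4)]] .
  then have "A - {\<omega>. \<tau> \<omega> \<le> ennreal s} = A - {\<omega>\<in>space Q. \<tau> \<omega> \<le> ennreal s}"
    by blast
  then have "A - {\<omega>. \<tau> \<omega> \<le> ennreal s} \<in> sets (F v)"
    using assms(4) stopping_time_le_sets[OF assms(1,2)] sets_filtration_mono[OF assms(2) True] by auto
  moreover have "{\<omega>\<in>space Q. min (\<tau> \<omega>) (ennreal u) \<le> ennreal v} \<in> sets (F v)"
    using stopping_time_min_le_sets[OF assms(1) _ assms(5)] assms(2,3) by simp
  moreover have "{\<omega> \<in> A - {\<omega>. \<tau> \<omega> \<le> ennreal s}. min (\<tau> \<omega>) (ennreal u) \<le> ennreal v}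
      = (A - {\<omega>. \<tau> \<omega> \<le> ennreal s}) \<inter> {\<omega>\<in>space Q. min (\<tau> \<omega>) (ennreal u) \<le> ennreal v}"
    using A_space by blast
  ultimately show ?thesis by simp
next
  case False
  have "{\<omega> \<in> A - {\<omega>. \<tau> \<omega> \<le> ennreal s}. min (\<tau> \<omega>) (ennreal u) \<le> ennreal v} = {}"
    using False assms(3,5)
    by (auto simp: min_le_iff_disj ennreal_le_iff dest: order_trans[OF _ ennreal_leI[of v s]])
  then show ?thesis by (metis sets.empty_sets)
qed

lemma martingale_set_integral_pos_part_mono:
  assumes mart: "martingale Q F N" and "0 \<le> s" "s \<le> t" and B: "B \<in> sets (F s)"
  shows "(\<integral>x. indicator B x * max (N s x - K) 0 \<partial>Q) \<le> (\<integral>x. indicator B x * max (N t x - K) 0 \<partial>Q)"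
proof -
  define C where "C = B \<inter> {x\<in>space Q. K < N s x}"
  have "N s \<in> borel_measurable (F s)" using mart \<open>0 \<le> s\<close> unfolding martingale_def adapted_def by blast
  then have "{x\<in>space (F s). K < N s x} \<in> sets (F s)" by measurable
  then have C: "C \<in> sets (F s)" unfolding C_def using B space_filtration[OF \<open>0 \<le> s\<close>] by auto
  have CQ: "C \<in> sets Q" and BQ: "B \<in> sets Q" using B C sets_filtration_into_sets \<open>0 \<le> s\<close> by auto
  have N_int: "integrable Q (N u)" if "0 \<le> u" for u using mart that unfolding martingale_def by blast
  have shifted: "(\<integral>x. indicator C x * (N u x - K) \<partial>Q) = (\<integral>x. indicator C x * N u x \<partial>Q) - measure Q C * K"
    if "0 \<le> u" for u
  proof -
    have "(\<integral>x. indicator C x * (N u x - K) \<partial>Q) = (\<integral>x. indicator C x * N u x - indicator C x * K \<partial>Q)"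
      by (simp add: right_diff_distrib)
    also have "\<dots> = (\<integral>x. indicator C x * N u x \<partial>Q) - (\<integral>x. indicator C x * K \<partial>Q)"
      using integrable_mult_indicator[OF CQ N_int[OF that]] CQ
      by (intro Bochner_Integration.integral_diff) (auto simp: emeasure_eq_measure)
    finally show ?thesis using CQ by simp
  qed
  have "(\<integral>x. indicator B x * max (N s x - K) 0 \<partial>Q) = (\<integral>x. indicator C x * (N s x - K) \<partial>Q)"
    using sets.sets_into_space[OF BQ] by (intro Bochner_Integration.integral_cong) (auto simp: C_def split: split_indicator)
  also have "\<dots> = (\<integral>x. indicator C x * (N t x - K) \<partial>Q)"
    using shifted \<open>0 \<le> s\<close> \<open>s \<le> t\<close> martingale_set_integral[OF mart \<open>0 \<le> s\<close> \<open>s \<le> t\<close> C] by simp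
  also have "\<dots> \<le> (\<integral>x. indicator B x * max (N t x - K) 0 \<partial>Q)"
  proof (rule integral_mono)
    have Nt: "integrable Q (\<lambda>x. N t x - K)" using N_int \<open>0 \<le> s\<close> \<open>s \<le> t\<close> by simp
    then have "integrable Q (\<lambda>x. max (N t x - K) 0)" by (rule integrable_max) simp
    from integrable_mult_indicator[OF BQ this]
    show "integrable Q (\<lambda>x. indicator B x * max (N t x - K) 0)" by simp
    show "integrable Q (\<lambda>x. indicator C x * (N t x - K))"
      using integrable_mult_indicator[OF CQ Nt] by simp
  qed (auto simp: C_def split: split_indicator)
  finally show ?thesis .
qed

subsection \<open>Optional stopping\<close>

context
  fixes t :: real and \<theta> :: "'a \<Rightarrow> real" and A :: "'a set"
  assumes t_nonneg: "0 \<le> t"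
    and \<theta>_bounds: "\<And>\<omega>. \<omega> \<in> space Q \<Longrightarrow> 0 \<le> \<theta> \<omega> \<and> \<theta> \<omega> \<le> t"
    and A_space: "A \<subseteq> space Q"
    and \<theta>_optional: "\<And>u. 0 \<le> u \<Longrightarrow> {\<omega>\<in>A. \<theta> \<omega> \<le> u} \<in> sets (F u)"
begin

lemma A_sets: "A \<in> sets Q"
proof -
  have "{\<omega>\<in>A. \<theta> \<omega> \<le> t} = A" using \<theta>_bounds A_space by auto
  then show ?thesis using \<theta>_optional[OF t_nonneg] sets_filtration_into_sets[OF t_nonneg] by metis
qed

lemma optional_less_sets: "0 \<le> a \<Longrightarrow> {\<omega>\<in>A. \<theta> \<omega> < a} \<in> sets (F (min a t))"
proof (cases "t < a")
  case True
  then have "{\<omega>\<in>A. \<theta> \<omega> < a} = {\<omega>\<in>A. \<theta> \<omega> \<le> t}" using \<theta>_bounds A_space by force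
  then show ?thesis using \<theta>_optional[OF t_nonneg] True by simp
next
  case False
  assume "0 \<le> a"
  have "{\<omega>\<in>A. \<theta> \<omega> < a} = (\<Union>m. {\<omega>\<in>A. \<theta> \<omega> \<le> a - 1 / Suc m})"
  proof (intro set_eqI iffI)
    fix x assume x: "x \<in> {\<omega>\<in>A. \<theta> \<omega> < a}"
    then have "0 < a - \<theta> x" by simp
    then obtain m where "inverse (real (Suc m)) < a - \<theta> x"
      using reals_Archimedean by blast
    then show "x \<in> (\<Union>m. {\<omega>\<in>A. \<theta> \<omega> \<le> a - 1 / Suc m})"
      using x by (auto simp: inverse_eq_divide intro!: exI[of _ m])
  next
    fix x assume "x \<in> (\<Union>m. {\<omega>\<in>A. \<theta> \<omega> \<le> a - 1 / Suc m})"
    then obtain m where "x \<in> A" "\<theta> x \<le> a - 1 / Suc m" by auto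
    moreover have "0 < 1 / real (Suc m)" by simp
    ultimately have "\<theta> x < a" by linarith
    then show "x \<in> {\<omega>\<in>A. \<theta> \<omega> < a}" using \<open>x \<in> A\<close> by simp
  qed
  moreover have "{\<omega>\<in>A. \<theta> \<omega> \<le> a - 1 / Suc m} \<in> sets (F a)" for m
  proof (cases "a - 1 / Suc m < 0")
    case True
    then have "{\<omega>\<in>A. \<theta> \<omega> \<le> a - 1 / Suc m} = {}" using \<theta>_bounds A_space by force
    then show ?thesis by (metis sets.empty_sets)
  next
    case False
    then show ?thesis
      using \<theta>_optional[of "a - 1 / Suc m"] sets_filtration_mono[of "a - 1 / Suc m" a] by auto
  qed
  ultimately show ?thesis using False by auto
qed

lemma dyadic_level_sets:
  assumes "1 \<le> k"
  shows "{\<omega>\<in>A. dyadic_index j (\<theta> \<omega>) = k} \<in> sets (F (min t (real k / 2^j)))"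
proof -
  have "{\<omega>\<in>A. dyadic_index j (\<theta> \<omega>) = k}
      = {\<omega>\<in>A. \<theta> \<omega> < real k / 2^j} - {\<omega>\<in>A. \<theta> \<omega> < (real k - 1) / 2^j}"
    using dyadic_index_eq_iff[OF _ assms] \<theta>_bounds A_space by blast
  moreover have "{\<omega>\<in>A. \<theta> \<omega> < real k / 2^j} \<in> sets (F (min t (real k / 2^j)))"
    using optional_less_sets[of "real k / 2^j"] by (simp add: min.commute)
  moreover have "{\<omega>\<in>A. \<theta> \<omega> < (real k - 1) / 2^j} \<in> sets (F (min t (real k / 2^j)))"
  proof -
    have "(real k - 1) / 2^j \<le> real k / 2^j" by (simp add: divide_right_mono)
    then have "sets (F (min ((real k - 1) / 2^j) t)) \<subseteq> sets (F (min t (real k / 2^j)))"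
      using assms t_nonneg by (intro sets_filtration_mono) auto
    then show ?thesis using optional_less_sets[of "(real k - 1) / 2^j"] assms by auto
  qed
  ultimately show ?thesis by auto
qed

lemma indicator_mult_dyadic_upper_eq_sum:
  fixes h :: "real \<Rightarrow> 'a \<Rightarrow> real"
  assumes "\<omega> \<in> space Q"
  shows "indicator A \<omega> * h (dyadic_upper t j (\<theta> \<omega>)) \<omega>
       = (\<Sum>k\<in>{1..dyadic_index j t}. indicator {\<omega>\<in>A. dyadic_index j (\<theta> \<omega>) = k} \<omega> * h (min t (real k / 2^j)) \<omega>)"
proof (cases "\<omega> \<in> A")
  case True
  have "dyadic_index j (\<theta> \<omega>) \<in> {1..dyadic_index j t}"
    using dyadic_index_mono[of "\<theta> \<omega>" t j] \<theta>_bounds[OF assms] by (auto simp: dyadic_index_def)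
  moreover have "(\<Sum>k\<in>{1..dyadic_index j t}. indicator {\<omega>\<in>A. dyadic_index j (\<theta> \<omega>) = k} \<omega> * h (min t (real k / 2^j)) \<omega>)
      = (\<Sum>k\<in>{1..dyadic_index j t}. if k = dyadic_index j (\<theta> \<omega>) then h (min t (real k / 2^j)) \<omega> else 0)"
    using True by (intro sum.cong) (auto split: split_indicator)
  ultimately show ?thesis
    using True by (simp add: dyadic_upper_def sum.delta')
qed simp

lemma dyadic_upper_set_integral_le:
  fixes h :: "real \<Rightarrow> 'a \<Rightarrow> real"
  assumes h_int: "\<And>u. 0 \<le> u \<Longrightarrow> integrable Q (h u)"
    and h_sub: "\<And>u B. 0 \<le> u \<Longrightarrow> u \<le> t \<Longrightarrow> B \<in> sets (F u) \<Longrightarrow>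
      (\<integral>\<omega>. indicator B \<omega> * h u \<omega> \<partial>Q) \<le> (\<integral>\<omega>. indicator B \<omega> * h t \<omega> \<partial>Q)"
  shows "integrable Q (\<lambda>\<omega>. indicator A \<omega> * h (dyadic_upper t j (\<theta> \<omega>)) \<omega>)"
    "(\<integral>\<omega>. indicator A \<omega> * h (dyadic_upper t j (\<theta> \<omega>)) \<omega> \<partial>Q) \<le> (\<integral>\<omega>. indicator A \<omega> * h t \<omega> \<partial>Q)"
proof -
  let ?B = "\<lambda>k. {\<omega>\<in>A. dyadic_index j (\<theta> \<omega>) = k}" and ?v = "\<lambda>k. min t (real k / 2^j)"
    and ?K = "{1..dyadic_index j t}"
  have v: "0 \<le> ?v k" "?v k \<le> t" for k using t_nonneg by simp_all
  have B: "?B k \<in> sets (F (?v k))" if "k \<in> ?K" for k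
    using that by (intro dyadic_level_sets) simp
  have int: "integrable Q (\<lambda>\<omega>. indicator (?B k) \<omega> * h u \<omega>)" if "k \<in> ?K" "0 \<le> u" for k u
    using integrable_mult_indicator[OF sets_filtration_into_sets[OF v(1) B[OF that(1)]] h_int[OF that(2)]]
    by simp
  have sum_int: "integrable Q (\<lambda>\<omega>. \<Sum>k\<in>?K. indicator (?B k) \<omega> * h (?v k) \<omega>)"
    using int v by (intro Bochner_Integration.integrable_sum) auto
  have at_upper: "\<And>\<omega>. \<omega> \<in> space Q \<Longrightarrow> indicator A \<omega> * h (dyadic_upper t j (\<theta> \<omega>)) \<omega>
      = (\<Sum>k\<in>?K. indicator (?B k) \<omega> * h (?v k) \<omega>)"
    by (rule indicator_mult_dyadic_upper_eq_sum)
  have at_t: "\<And>\<omega>. \<omega> \<in> space Q \<Longrightarrow> indicator A \<omega> * h t \<omega> = (\<Sum>k\<in>?K. indicator (?B k) \<omega> * h t \<omega>)"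
    using indicator_mult_dyadic_upper_eq_sum[where h="\<lambda>_. h t"] by simp
  show "integrable Q (\<lambda>\<omega>. indicator A \<omega> * h (dyadic_upper t j (\<theta> \<omega>)) \<omega>)"
    by (rule Bochner_Integration.integrable_cong[THEN iffD2, OF refl at_upper sum_int])
  have "(\<integral>\<omega>. indicator A \<omega> * h (dyadic_upper t j (\<theta> \<omega>)) \<omega> \<partial>Q)
      = (\<integral>\<omega>. (\<Sum>k\<in>?K. indicator (?B k) \<omega> * h (?v k) \<omega>) \<partial>Q)"
    by (rule Bochner_Integration.integral_cong[OF refl at_upper])
  also have "\<dots> = (\<Sum>k\<in>?K. \<integral>\<omega>. indicator (?B k) \<omega> * h (?v k) \<omega> \<partial>Q)"
    by (rule Bochner_Integration.integral_sum) (rule int, assumption, rule v)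
  also have "\<dots> \<le> (\<Sum>k\<in>?K. \<integral>\<omega>. indicator (?B k) \<omega> * h t \<omega> \<partial>Q)"
    by (intro sum_mono h_sub v B)
  also have "\<dots> = (\<integral>\<omega>. (\<Sum>k\<in>?K. indicator (?B k) \<omega> * h t \<omega>) \<partial>Q)"
    by (rule Bochner_Integration.integral_sum[symmetric]) (rule int, assumption, rule t_nonneg)
  also have "\<dots> = (\<integral>\<omega>. indicator A \<omega> * h t \<omega> \<partial>Q)"
    by (rule Bochner_Integration.integral_cong[OF refl at_t[symmetric]])
  finally show "(\<integral>\<omega>. indicator A \<omega> * h (dyadic_upper t j (\<theta> \<omega>)) \<omega> \<partial>Q) \<le> (\<integral>\<omega>. indicator A \<omega> * h t \<omega> \<partial>Q)" .
qed

text \<open>Optional stopping at the bounded time \<theta> on A: approximate \<theta> from above by the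
  dyadic times dyadic_upper t j \<theta>, where it is a finite sum over fixed times, and pass to the
  limit by right-continuity. The tails are controlled by the submartingale (N - K)^+.\<close>

lemma optional_stopping_set_integral:
  assumes mart: "martingale Q F N"
    and N_nonneg: "\<And>u \<omega>. 0 \<le> u \<Longrightarrow> \<omega> \<in> space Q \<Longrightarrow> 0 \<le> N u \<omega>"
    and N_rc: "\<And>u \<omega>. 0 \<le> u \<Longrightarrow> \<omega> \<in> space Q \<Longrightarrow> continuous (at_right u) (\<lambda>s. N s \<omega>)"
  shows "integrable Q (\<lambda>\<omega>. indicator A \<omega> * N (\<theta> \<omega>) \<omega>)"
    "(\<integral>\<omega>. indicator A \<omega> * N (\<theta> \<omega>) \<omega> \<partial>Q) = (\<integral>\<omega>. indicator A \<omega> * N t \<omega> \<partial>Q)"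
proof -
  have N_int: "integrable Q (N u)" if "0 \<le> u" for u
    using mart that unfolding martingale_def by blast
  have N_sub: "(\<integral>\<omega>. indicator B \<omega> * N u \<omega> \<partial>Q) \<le> (\<integral>\<omega>. indicator B \<omega> * N t \<omega> \<partial>Q)"
    and neg_N_sub: "(\<integral>\<omega>. indicator B \<omega> * - N u \<omega> \<partial>Q) \<le> (\<integral>\<omega>. indicator B \<omega> * - N t \<omega> \<partial>Q)"
    if "0 \<le> u" "u \<le> t" "B \<in> sets (F u)" for u B
    using martingale_set_integral[OF mart that] by simp_all
  define g where "g j \<omega> = indicator A \<omega> * N (dyadic_upper t j (\<theta> \<omega>)) \<omega>" for j \<omega>
  have g_int: "integrable Q (g j)" for j
    unfolding g_def by (rule dyadic_upper_set_integral_le(1)[where h=N, OF N_int N_sub])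
  have g_integral: "integral\<^sup>L Q (g j) = (\<integral>\<omega>. indicator A \<omega> * N t \<omega> \<partial>Q)" for j
  proof (rule antisym)
    show "integral\<^sup>L Q (g j) \<le> (\<integral>\<omega>. indicator A \<omega> * N t \<omega> \<partial>Q)"
      unfolding g_def by (rule dyadic_upper_set_integral_le(2)[where h=N, OF N_int N_sub])
    have "(\<integral>\<omega>. indicator A \<omega> * - N (dyadic_upper t j (\<theta> \<omega>)) \<omega> \<partial>Q)
        \<le> (\<integral>\<omega>. indicator A \<omega> * - N t \<omega> \<partial>Q)"
      using N_int by (intro dyadic_upper_set_integral_le(2)[where h="\<lambda>u \<omega>. - N u \<omega>", OF _ neg_N_sub]) auto
    then show "(\<integral>\<omega>. indicator A \<omega> * N t \<omega> \<partial>Q) \<le> integral\<^sup>L Q (g j)"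
      unfolding g_def mult_minus_right Bochner_Integration.integral_minus by linarith
  qed
  have tails: "(\<integral>\<omega>. max (g j \<omega> - K) 0 \<partial>Q) \<le> (\<integral>\<omega>. max (N t \<omega> - K) 0 \<partial>Q)" if "0 \<le> K" for j K
  proof -
    have pos_int: "integrable Q (\<lambda>\<omega>. max (N u \<omega> - K) 0)" if "0 \<le> u" for u
      using N_int[OF that] by (intro integrable_max) simp_all
    have "(\<integral>\<omega>. max (g j \<omega> - K) 0 \<partial>Q)
        = (\<integral>\<omega>. indicator A \<omega> * max (N (dyadic_upper t j (\<theta> \<omega>)) \<omega> - K) 0 \<partial>Q)"
      using \<open>0 \<le> K\<close> by (intro Bochner_Integration.integral_cong) (auto simp: g_def split: split_indicator)
    also have "\<dots> \<le> (\<integral>\<omega>. indicator A \<omega> * max (N t \<omega> - K) 0 \<partial>Q)"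
      by (rule dyadic_upper_set_integral_le(2)[where h="\<lambda>u \<omega>. max (N u \<omega> - K) 0", OF pos_int
        martingale_set_integral_pos_part_mono[OF mart]])
    also have "\<dots> \<le> (\<integral>\<omega>. max (N t \<omega> - K) 0 \<partial>Q)"
    proof (rule integral_mono)
      show "integrable Q (\<lambda>\<omega>. indicator A \<omega> * max (N t \<omega> - K) 0)"
        using integrable_mult_indicator[OF A_sets pos_int[OF t_nonneg]] by simp
    qed (use pos_int[OF t_nonneg] in \<open>auto split: split_indicator\<close>)
    finally show ?thesis .
  qed
  have g_lim: "(\<lambda>j. g j \<omega>) \<longlonglongrightarrow> indicator A \<omega> * N (\<theta> \<omega>) \<omega>" if "\<omega> \<in> space Q" for \<omega>
    unfolding g_def using \<theta>_bounds[OF that] N_rc[OF _ that]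
    by (intro tendsto_mult tendsto_const tendsto_dyadic_upper) auto
  have g_nonneg: "0 \<le> g j \<omega>" if "\<omega> \<in> space Q" for j \<omega>
    unfolding g_def using N_nonneg[OF _ that] dyadic_upper_bounds[of "\<theta> \<omega>" t j] \<theta>_bounds[OF that] by simp
  show "integrable Q (\<lambda>\<omega>. indicator A \<omega> * N (\<theta> \<omega>) \<omega>)"
    "(\<integral>\<omega>. indicator A \<omega> * N (\<theta> \<omega>) \<omega> \<partial>Q) = (\<integral>\<omega>. indicator A \<omega> * N t \<omega> \<partial>Q)"
    using integral_eq_of_tendsto_uniform_tails[OF g_int g_nonneg g_lim g_integral tails
        tendsto_integral_pos_part_minus_nat[OF N_int[OF t_nonneg]]] by auto
qed

end


lemma optional_stopping_stopped_set_integral: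
  assumes mart: "martingale Q F N"
    and N_nonneg: "\<And>u \<omega>. 0 \<le> u \<Longrightarrow> \<omega> \<in> space Q \<Longrightarrow> 0 \<le> N u \<omega>"
    and N_rc: "\<And>u \<omega>. 0 \<le> u \<Longrightarrow> \<omega> \<in> space Q \<Longrightarrow> continuous (at_right u) (\<lambda>s. N s \<omega>)"
    and "0 \<le> t" and A_space: "A \<subseteq> space Q"
    and A_optional: "\<And>v. 0 \<le> v \<Longrightarrow> {\<omega>\<in>A. min (\<tau> \<omega>) (ennreal t) \<le> ennreal v} \<in> sets (F v)"
  shows "integrable Q (\<lambda>\<omega>. indicator A \<omega> * stopped \<tau> N t \<omega>)"
    "(\<integral>\<omega>. indicator A \<omega> * stopped \<tau> N t \<omega> \<partial>Q) = (\<integral>\<omega>. indicator A \<omega> * N t \<omega> \<partial>Q)"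
proof -
  define \<theta> where "\<theta> \<omega> = enn2real (min (\<tau> \<omega>) (ennreal t))" for \<omega>
  have stopped_\<theta>: "stopped \<tau> N t = (\<lambda>\<omega>. N (\<theta> \<omega>) \<omega>)"
    unfolding \<theta>_def by (rule ext) (rule stopped_eq_min[OF \<open>0 \<le> t\<close>])
  have \<theta>_bounds: "0 \<le> \<theta> \<omega> \<and> \<theta> \<omega> \<le> t" if "\<omega> \<in> space Q" for \<omega>
    unfolding \<theta>_def using enn2real_min_ennreal_le[OF \<open>0 \<le> t\<close>] by simp
  have \<theta>_optional: "{\<omega>\<in>A. \<theta> \<omega> \<le> v} \<in> sets (F v)" if "0 \<le> v" for v
    unfolding \<theta>_def enn2real_min_ennreal_le_iff[OF \<open>0 \<le> t\<close> that] using A_optional[OF that] .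
  show "integrable Q (\<lambda>\<omega>. indicator A \<omega> * stopped \<tau> N t \<omega>)"
    unfolding stopped_\<theta> using \<open>0 \<le> t\<close> \<theta>_bounds A_space \<theta>_optional mart N_nonneg N_rc
    by (rule optional_stopping_set_integral(1))
  show "(\<integral>\<omega>. indicator A \<omega> * stopped \<tau> N t \<omega> \<partial>Q) = (\<integral>\<omega>. indicator A \<omega> * N t \<omega> \<partial>Q)"
    unfolding stopped_\<theta> using \<open>0 \<le> t\<close> \<theta>_bounds A_space \<theta>_optional mart N_nonneg N_rc
    by (rule optional_stopping_set_integral(2))
qed

lemma stopped_martingale_set_integral:
  assumes mart: "martingale Q F N"
    and N_nonneg: "\<And>u \<omega>. 0 \<le> u \<Longrightarrow> \<omega> \<in> space Q \<Longrightarrow> 0 \<le> N u \<omega>"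
    and N_rc: "\<And>u \<omega>. 0 \<le> u \<Longrightarrow> \<omega> \<in> space Q \<Longrightarrow> continuous (at_right u) (\<lambda>s. N s \<omega>)"
    and \<tau>: "is_stopping_time F \<tau>" and "0 \<le> s" "s \<le> t" and A: "A \<in> sets (F s)"
  shows "integrable Q (stopped \<tau> N t)"
    "(\<integral>\<omega>. indicator A \<omega> * stopped \<tau> N t \<omega> \<partial>Q) = (\<integral>\<omega>. indicator A \<omega> * stopped \<tau> N s \<omega> \<partial>Q)"
proof -
  have "0 \<le> t" using \<open>0 \<le> s\<close> \<open>s \<le> t\<close> by simp
  have stopped_int: "integrable Q (stopped \<tau> N u)" if "0 \<le> u" for u
  proof -
    have "integrable Q (\<lambda>\<omega>. indicator (space Q) \<omega> * stopped \<tau> N u \<omega>)"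
      using mart N_nonneg N_rc that order_refl stopping_time_min_le_sets[OF \<tau> that]
      by (rule optional_stopping_stopped_set_integral(1))
    then show ?thesis
      by (rule Bochner_Integration.integrable_cong[OF refl, THEN iffD1, rotated]) simp
  qed
  show "integrable Q (stopped \<tau> N t)" by (rule stopped_int[OF \<open>0 \<le> t\<close>])
  define S where "S = {\<omega>\<in>space Q. \<tau> \<omega> \<le> ennreal s}"
  have AQ: "A \<in> sets Q" using sets_filtration_into_sets[OF \<open>0 \<le> s\<close> A] .
  have SQ: "S \<in> sets Q"
    using sets_filtration_into_sets[OF \<open>0 \<le> s\<close> stopping_time_le_sets[OF \<tau> \<open>0 \<le> s\<close>]]
    unfolding S_def .
  have A_minus_S: "A - S = A - {\<omega>. \<tau> \<omega> \<le> ennreal s}"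
    using sets.sets_into_space[OF AQ] unfolding S_def by blast
  have A_minus_S_sets: "A - S \<in> sets (F s)"
    using A stopping_time_le_sets[OF \<tau> \<open>0 \<le> s\<close>] unfolding S_def by auto
  have A_minus_S_space: "A - S \<subseteq> space Q" using sets.sets_into_space[OF AQ] by blast
  have A_minus_S_optional: "{\<omega> \<in> A - S. min (\<tau> \<omega>) (ennreal t) \<le> ennreal v} \<in> sets (F v)"
    if "0 \<le> v" for v
    unfolding A_minus_S by (rule stopping_time_after_sets[OF \<tau> \<open>0 \<le> s\<close> \<open>s \<le> t\<close> A that])
  have "(\<integral>\<omega>. indicator (A - S) \<omega> * stopped \<tau> N t \<omega> \<partial>Q) = (\<integral>\<omega>. indicator (A - S) \<omega> * N t \<omega> \<partial>Q)"
    using mart N_nonneg N_rc \<open>0 \<le> t\<close> A_minus_S_space A_minus_S_optional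
    by (rule optional_stopping_stopped_set_integral(2))
  also have "\<dots> = (\<integral>\<omega>. indicator (A - S) \<omega> * N s \<omega> \<partial>Q)"
    by (rule martingale_set_integral[OF mart \<open>0 \<le> s\<close> \<open>s \<le> t\<close> A_minus_S_sets])
  also have "\<dots> = (\<integral>\<omega>. indicator (A - S) \<omega> * stopped \<tau> N s \<omega> \<partial>Q)"
    by (intro Bochner_Integration.integral_cong) (auto simp: S_def stopped_def split: split_indicator)
  finally show "(\<integral>\<omega>. indicator A \<omega> * stopped \<tau> N t \<omega> \<partial>Q) = (\<integral>\<omega>. indicator A \<omega> * stopped \<tau> N s \<omega> \<partial>Q)"
    using stopped_int \<open>0 \<le> s\<close> \<open>0 \<le> t\<close> \<open>s \<le> t\<close>
    by (intro integral_indicator_eq_of_eq_on_inter[OF _ _ AQ SQ])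
      (auto simp: S_def intro: stopped_eq_stopped_after_stop)
qed

text \<open>Stop the martingales X^{\<sigma>_k} of a localizing sequence once more at \<tau> and let
  k \<rightarrow> \<infinity> by dominated convergence.\<close>

lemma martingale_stopped_local_martingale_bounded:
  assumes lm: "local_martingale Q F X"
    and X_nonneg: "\<And>t \<omega>. 0 \<le> t \<Longrightarrow> \<omega> \<in> space Q \<Longrightarrow> 0 \<le> X t \<omega>"
    and \<tau>: "is_stopping_time F \<tau>"
    and adapted: "adapted F (stopped \<tau> X)" and bounded: "bounded_process Q (stopped \<tau> X)"
  shows "martingale Q F (stopped \<tau> X)"
proof -
  obtain \<sigma> where \<sigma>: "localizing_seq Q F \<sigma>" and \<sigma>_mart: "\<And>k. martingale Q F (stopped (\<sigma> k) X)"
    using lm unfolding local_martingale_def by blast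
  obtain C where C: "\<And>t \<omega>. 0 \<le> t \<Longrightarrow> \<omega> \<in> space Q \<Longrightarrow> \<bar>stopped \<tau> X t \<omega>\<bar> \<le> C"
    using bounded unfolding bounded_process_def by blast
  have meas: "stopped \<tau> X t \<in> borel_measurable Q" if "0 \<le> t" for t
    using adapted measurable_from_subalg[OF subalgebra_filtration[OF that]] that
    unfolding adapted_def by blast
  have X_rc: "continuous (at_right u) (\<lambda>s. X s \<omega>)" if "0 \<le> u" "\<omega> \<in> space Q" for u \<omega>
    using lm that unfolding local_martingale_def cadlag_def by blast
  have stopped_twice:
    "integrable Q (stopped (\<sigma> k) (stopped \<tau> X) u)"
    "(\<integral>\<omega>. indicator A \<omega> * stopped (\<sigma> k) (stopped \<tau> X) t \<omega> \<partial>Q)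
      = (\<integral>\<omega>. indicator A \<omega> * stopped (\<sigma> k) (stopped \<tau> X) s \<omega> \<partial>Q)"
    if "0 \<le> s" "s \<le> t" "0 \<le> u" "A \<in> sets (F s)" for k s t u A
  proof -
    have "0 \<le> stopped (\<sigma> k) X v \<omega>" if "0 \<le> v" "\<omega> \<in> space Q" for v \<omega>
      using X_nonneg[OF _ that(2)] that(1) by (simp add: stopped_eq_min)
    moreover have "continuous (at_right v) (\<lambda>r. stopped (\<sigma> k) X r \<omega>)" if "0 \<le> v" "\<omega> \<in> space Q" for v \<omega>
      using X_rc that by (intro continuous_at_right_stopped) auto
    ultimately have "integrable Q (stopped \<tau> (stopped (\<sigma> k) X) u)"
      "(\<integral>\<omega>. indicator A \<omega> * stopped \<tau> (stopped (\<sigma> k) X) t \<omega> \<partial>Q)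
        = (\<integral>\<omega>. indicator A \<omega> * stopped \<tau> (stopped (\<sigma> k) X) s \<omega> \<partial>Q)"
      using stopped_martingale_set_integral[OF \<sigma>_mart _ _ \<tau>, of k] that by (blast, blast)
    moreover have "stopped \<tau> (stopped (\<sigma> k) X) v = stopped (\<sigma> k) (stopped \<tau> X) v" if "0 \<le> v" for v
      by (rule ext) (rule stopped_stopped_commute[OF that])
    ultimately show "integrable Q (stopped (\<sigma> k) (stopped \<tau> X) u)"
      "(\<integral>\<omega>. indicator A \<omega> * stopped (\<sigma> k) (stopped \<tau> X) t \<omega> \<partial>Q)
        = (\<integral>\<omega>. indicator A \<omega> * stopped (\<sigma> k) (stopped \<tau> X) s \<omega> \<partial>Q)"
      using that by auto
  qed
  have \<sigma>_infty: "AE \<omega> in Q. (\<lambda>k. \<sigma> k \<omega>) \<longlonglongrightarrow> \<infinity>"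
    using \<sigma> unfolding localizing_seq_def by (auto elim: AE_mp)
  have limit: "(\<lambda>k. \<integral>\<omega>. indicator A \<omega> * stopped (\<sigma> k) (stopped \<tau> X) u \<omega> \<partial>Q)
      \<longlonglongrightarrow> (\<integral>\<omega>. indicator A \<omega> * stopped \<tau> X u \<omega> \<partial>Q)" if "0 \<le> u" "A \<in> sets Q" for u A
    using stopped_twice(1)[OF order_refl order_refl that(1) sets.empty_sets] that meas C \<sigma>_infty
    by (intro tendsto_integral_stopped_bounded) auto
  show ?thesis
  proof (rule martingaleI_set_integral[OF adapted])
    show "integrable Q (stopped \<tau> X t)" if "0 \<le> t" for t
      using C[OF that] meas[OF that] by (intro integrable_const_bound[where B=C] AE_I2) auto
    fix s t A assume "0 \<le> s" "s \<le> t" "A \<in> sets (F s)"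
    then have "0 \<le> t" "A \<in> sets Q" using sets_filtration_into_sets by auto
    show "(\<integral>\<omega>. indicator A \<omega> * stopped \<tau> X t \<omega> \<partial>Q) = (\<integral>\<omega>. indicator A \<omega> * stopped \<tau> X s \<omega> \<partial>Q)"
      using LIMSEQ_unique[OF limit[OF \<open>0 \<le> t\<close> \<open>A \<in> sets Q\<close>]] limit[OF \<open>0 \<le> s\<close> \<open>A \<in> sets Q\<close>]
        stopped_twice(2)[OF \<open>0 \<le> s\<close> \<open>s \<le> t\<close> \<open>0 \<le> s\<close> \<open>A \<in> sets (F s)\<close>] by simp
  qed
qed

subsection \<open>Optional projections\<close>

lemma is_stopping_time_min_ennreal:
  assumes "is_stopping_time F \<tau>" "0 \<le> u"
  shows "is_stopping_time F (\<lambda>\<omega>. min (\<tau> \<omega>) (ennreal u))"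
  unfolding is_stopping_time_def
proof (intro allI impI)
  fix t :: real assume "0 \<le> t"
  then show "{\<omega>\<in>space (F t). min (\<tau> \<omega>) (ennreal u) \<le> ennreal t} \<in> sets (F t)"
    using stopping_time_min_le_sets[OF assms \<open>0 \<le> t\<close>] by (simp add: space_filtration)
qed

lemma is_stopping_time_ennreal: "is_stopping_time F (\<lambda>_. ennreal u)"
  unfolding is_stopping_time_def by (auto simp: ennreal_le_iff)

lemma F_infty_subset_sets: "F_infty Q F \<subseteq> sets Q"
  unfolding F_infty_def using sets_filtration_into_sets by (intro sets.sigma_sets_subset) auto

lemma sets_F_at:
  "sets (F_at Q F \<rho>) = sigma_sets (space Q) {A \<in> F_infty Q F. \<forall>t\<ge>0. {\<omega>\<in>A. \<rho> \<omega> \<le> ennreal t} \<in> sets (F t)}"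
  unfolding F_at_def using F_infty_subset_sets sets.sets_into_space by (intro sets_measure_of) blast

lemma space_F_at: "space (F_at Q F \<rho>) = space Q"
  unfolding F_at_def by (rule space_measure_of_conv)

lemma subalgebra_F_at: "subalgebra Q (F_at Q F \<rho>)"
  unfolding subalgebra_def sets_F_at space_F_at
  using F_infty_subset_sets by (auto intro!: sets.sigma_sets_subset)

lemma subalgebra_filtration_F_at:
  assumes "0 \<le> u" and \<rho>_le: "\<And>\<omega>. \<omega> \<in> space Q \<Longrightarrow> \<rho> \<omega> \<le> ennreal u"
  shows "subalgebra (F u) (F_at Q F \<rho>)"
proof -
  have "B \<in> sets (F u)" if "B \<in> F_infty Q F" "\<forall>t\<ge>0. {\<omega>\<in>B. \<rho> \<omega> \<le> ennreal t} \<in> sets (F t)" for B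
  proof -
    have "{\<omega>\<in>B. \<rho> \<omega> \<le> ennreal u} = B"
      using \<rho>_le F_infty_subset_sets sets.sets_into_space that(1) by blast
    then show ?thesis using that(2) \<open>0 \<le> u\<close> by metis
  qed
  then show ?thesis
    unfolding subalgebra_def sets_F_at space_F_at space_filtration[OF \<open>0 \<le> u\<close>]
    by (auto intro!: sets.sigma_sets_subset[of _ "F u", unfolded space_filtration[OF \<open>0 \<le> u\<close>]])
qed

lemma sets_F_atI:
  assumes "0 \<le> s" "B \<in> sets (F s)" "\<And>v. 0 \<le> v \<Longrightarrow> {\<omega>\<in>B. \<rho> \<omega> \<le> ennreal v} \<in> sets (F v)"
  shows "B \<in> sets (F_at Q F \<rho>)"
proof -
  have "B \<in> F_infty Q F" unfolding F_infty_def using assms(1,2) by (intro sigma_sets.Basic) auto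
  then show ?thesis unfolding sets_F_at using assms(3) by (intro sigma_sets.Basic) blast
qed

lemma measurable_filtration_AE_cong:
  fixes f g :: "'a \<Rightarrow> real"
  assumes null: "\<And>N B. N \<in> null_sets Q \<Longrightarrow> B \<subseteq> N \<Longrightarrow> B \<in> sets (F 0)"
    and "0 \<le> u" and f: "f \<in> borel_measurable (F u)" and f_eq: "AE \<omega> in Q. f \<omega> = g \<omega>"
  shows "g \<in> borel_measurable (F u)"
proof (rule measurableI)
  fix B :: "real set" assume "B \<in> sets borel"
  obtain N where N: "{\<omega>\<in>space Q. f \<omega> \<noteq> g \<omega>} \<subseteq> N" "N \<in> null_sets Q"
    using f_eq unfolding eventually_ae_filter by blast
  have null_subsets: "C \<in> sets (F u)" if "C \<subseteq> N" for C
    using null[OF N(2) that] sets_filtration_mono[OF order_refl \<open>0 \<le> u\<close>] by blast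
  have "f -` B \<inter> space (F u) \<in> sets (F u)" using f \<open>B \<in> sets borel\<close> by (rule measurable_sets)
  moreover have "g -` B \<inter> space (F u) = ((f -` B \<inter> space (F u)) - N) \<union> (g -` B \<inter> space (F u) \<inter> N)"
  proof (intro set_eqI iffI)
    fix x assume "x \<in> g -` B \<inter> space (F u)"
    then show "x \<in> ((f -` B \<inter> space (F u)) - N) \<union> (g -` B \<inter> space (F u) \<inter> N)"
      using N(1) space_filtration[OF \<open>0 \<le> u\<close>] by (cases "x \<in> N") auto
  next
    fix x assume "x \<in> ((f -` B \<inter> space (F u)) - N) \<union> (g -` B \<inter> space (F u) \<inter> N)"
    then show "x \<in> g -` B \<inter> space (F u)"
      using N(1) space_filtration[OF \<open>0 \<le> u\<close>] by (cases "x \<in> N") auto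
  qed
  moreover have "N \<in> sets (F u)" "g -` B \<inter> space (F u) \<inter> N \<in> sets (F u)"
    by (auto intro: null_subsets)
  ultimately show "g -` B \<inter> space (F u) \<in> sets (F u)" by (metis sets.Diff sets.Un)
qed simp

context
  fixes X Y :: "real \<Rightarrow> 'a \<Rightarrow> real"
  assumes null: "\<And>N B. N \<in> null_sets Q \<Longrightarrow> B \<subseteq> N \<Longrightarrow> B \<in> sets (F 0)"
    and proj: "optional_projection Q F X Y"
begin

lemma measurable_value_at_optional_projection:
  assumes \<rho>: "is_stopping_time F \<rho>" and "0 \<le> u" and \<rho>_le: "\<And>\<omega>. \<omega> \<in> space Q \<Longrightarrow> \<rho> \<omega> \<le> ennreal u"
  shows "value_at Y \<rho> \<in> borel_measurable (F u)"
proof (rule measurable_filtration_AE_cong[OF null \<open>0 \<le> u\<close>])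
  have "subalgebra (F u) (F_at Q F \<rho>)"
    using \<rho>_le by (rule subalgebra_filtration_F_at[OF \<open>0 \<le> u\<close>])
  then show "real_cond_exp Q (F_at Q F \<rho>) (value_at X \<rho>) \<in> borel_measurable (F u)"
    by (rule measurable_from_subalg) (rule borel_measurable_cond_exp)
  show "AE \<omega> in Q. real_cond_exp Q (F_at Q F \<rho>) (value_at X \<rho>) \<omega> = value_at Y \<rho> \<omega>"
    using proj \<rho> unfolding optional_projection_def by (auto elim: AE_mp)
qed

lemma adapted_optional_projection: "adapted F Y"
  unfolding adapted_def
proof (intro allI impI)
  fix t :: real assume "0 \<le> t"
  have "value_at Y (\<lambda>_. ennreal t) \<in> borel_measurable (F t)"
    by (rule measurable_value_at_optional_projection[OF is_stopping_time_ennreal \<open>0 \<le> t\<close>]) simp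
  then show "Y t \<in> borel_measurable (F t)" by (simp add: value_at_ennreal[OF \<open>0 \<le> t\<close>])
qed

lemma stopped_optional_projection:
  assumes \<tau>: "is_stopping_time F \<tau>" and "0 \<le> u" and X_int: "integrable Q (stopped \<tau> X u)"
  shows "stopped \<tau> Y u \<in> borel_measurable (F u)" "integrable Q (stopped \<tau> Y u)"
    "B \<in> sets (F_at Q F (\<lambda>\<omega>. min (\<tau> \<omega>) (ennreal u))) \<Longrightarrow>
      (\<integral>\<omega>. indicator B \<omega> * stopped \<tau> Y u \<omega> \<partial>Q) = (\<integral>\<omega>. indicator B \<omega> * stopped \<tau> X u \<omega> \<partial>Q)"
proof -
  note \<tau>u = is_stopping_time_min_ennreal[OF \<tau> \<open>0 \<le> u\<close>]
  show Y_meas: "stopped \<tau> Y u \<in> borel_measurable (F u)"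
    using measurable_value_at_optional_projection[OF \<tau>u \<open>0 \<le> u\<close>]
    by (simp add: value_at_min_ennreal[OF \<open>0 \<le> u\<close>])
  have "AE \<omega> in Q. value_at Y (\<lambda>\<omega>. min (\<tau> \<omega>) (ennreal u)) \<omega>
      = real_cond_exp Q (F_at Q F (\<lambda>\<omega>. min (\<tau> \<omega>) (ennreal u))) (value_at X (\<lambda>\<omega>. min (\<tau> \<omega>) (ennreal u))) \<omega>"
    using proj \<tau>u unfolding optional_projection_def by blast
  then have Y_cond_exp: "AE \<omega> in Q. stopped \<tau> Y u \<omega>
      = real_cond_exp Q (F_at Q F (\<lambda>\<omega>. min (\<tau> \<omega>) (ennreal u))) (stopped \<tau> X u) \<omega>"
    by (simp only: value_at_min_ennreal[OF \<open>0 \<le> u\<close>])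
  note cond_exp = AE_eq_real_cond_exp_set_integral[OF subalgebra_F_at X_int
      measurable_from_subalg[OF subalgebra_filtration[OF \<open>0 \<le> u\<close>] Y_meas] Y_cond_exp]
  show "integrable Q (stopped \<tau> Y u)" by (rule cond_exp(1))
  show "B \<in> sets (F_at Q F (\<lambda>\<omega>. min (\<tau> \<omega>) (ennreal u))) \<Longrightarrow>
      (\<integral>\<omega>. indicator B \<omega> * stopped \<tau> Y u \<omega> \<partial>Q) = (\<integral>\<omega>. indicator B \<omega> * stopped \<tau> X u \<omega> \<partial>Q)"
    by (rule cond_exp(2))
qed

text \<open>On {\<tau> > s} an event of F_s lies both in F_{\<tau> \<and> t} and
  in G_s, which transfers the (Q,G)-martingale property of X^\<tau> to Y^\<tau>; on {\<tau> \<le> s}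
  nothing moves between s and t.\<close>

lemma martingale_stopped_optional_projection:
  assumes G: "filtered_prob_space Q G" and FG: "sub_filtration F G"
    and \<tau>: "is_stopping_time F \<tau>" and mart: "martingale Q G (stopped \<tau> X)"
  shows "martingale Q F (stopped \<tau> Y)"
proof -
  let ?F_at = "\<lambda>u. F_at Q F (\<lambda>\<omega>. min (\<tau> \<omega>) (ennreal u))"
  have X_int: "integrable Q (stopped \<tau> X u)" if "0 \<le> u" for u
    using mart that unfolding martingale_def by blast
  note Y = stopped_optional_projection[OF \<tau> _ X_int]
  have Y_int: "integrable Q (stopped \<tau> Y u)" if "0 \<le> u" for u
    using Y(2) that by blast
  have Y_set_integral: "(\<integral>\<omega>. indicator B \<omega> * stopped \<tau> Y u \<omega> \<partial>Q) = (\<integral>\<omega>. indicator B \<omega> * stopped \<tau> X u \<omega> \<partial>Q)"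
    if "0 \<le> u" "B \<in> sets (?F_at u)" for u B
    using Y(3) that by blast
  show ?thesis
  proof (rule martingaleI_set_integral[OF _ Y_int])
    show "adapted F (stopped \<tau> Y)" unfolding adapted_def using Y(1) by blast
    fix s t A assume "0 \<le> s" "s \<le> t" and A: "A \<in> sets (F s)"
    then have "0 \<le> t" by simp
    define S where "S = {\<omega>\<in>space Q. \<tau> \<omega> \<le> ennreal s}"
    have S: "S \<in> sets (F s)"
      unfolding S_def by (rule stopping_time_le_sets[OF \<tau> \<open>0 \<le> s\<close>])
    have AQ: "A \<in> sets Q" and SQ: "S \<in> sets Q"
      using A S sets_filtration_into_sets[OF \<open>0 \<le> s\<close>] by blast+
    have A_minus_S: "A - S = A - {\<omega>. \<tau> \<omega> \<le> ennreal s}"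
      using sets.sets_into_space[OF AQ] unfolding S_def by blast
    have A_minus_S_sets: "A - S \<in> sets (F s)" using A S by (rule sets.Diff)
    have F_at_A_minus_S: "A - S \<in> sets (?F_at u)" if "s \<le> u" for u
    proof (rule sets_F_atI[OF \<open>0 \<le> s\<close> A_minus_S_sets])
      fix v :: real assume "0 \<le> v"
      show "{\<omega> \<in> A - S. min (\<tau> \<omega>) (ennreal u) \<le> ennreal v} \<in> sets (F v)"
        unfolding A_minus_S by (rule stopping_time_after_sets[OF \<tau> \<open>0 \<le> s\<close> that A \<open>0 \<le> v\<close>])
    qed
    have G_A_minus_S: "A - S \<in> sets (G s)"
      using A_minus_S_sets FG \<open>0 \<le> s\<close> unfolding sub_filtration_def by blast
    show "(\<integral>\<omega>. indicator A \<omega> * stopped \<tau> Y t \<omega> \<partial>Q) = (\<integral>\<omega>. indicator A \<omega> * stopped \<tau> Y s \<omega> \<partial>Q)"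
    proof (rule integral_indicator_eq_of_eq_on_inter[OF Y_int[OF \<open>0 \<le> t\<close>] Y_int[OF \<open>0 \<le> s\<close>] AQ SQ])
      show "stopped \<tau> Y t \<omega> = stopped \<tau> Y s \<omega>" if "\<omega> \<in> A \<inter> S" for \<omega>
        using that \<open>0 \<le> s\<close> \<open>s \<le> t\<close> unfolding S_def by (intro stopped_eq_stopped_after_stop) auto
      have "(\<integral>\<omega>. indicator (A - S) \<omega> * stopped \<tau> Y t \<omega> \<partial>Q)
          = (\<integral>\<omega>. indicator (A - S) \<omega> * stopped \<tau> X t \<omega> \<partial>Q)"
        by (rule Y_set_integral[OF \<open>0 \<le> t\<close> F_at_A_minus_S[OF \<open>s \<le> t\<close>]])
      also have "\<dots> = (\<integral>\<omega>. indicator (A - S) \<omega> * stopped \<tau> X s \<omega> \<partial>Q)"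
        by (rule filtered_prob_space.martingale_set_integral[OF G mart \<open>0 \<le> s\<close> \<open>s \<le> t\<close> G_A_minus_S])
      also have "\<dots> = (\<integral>\<omega>. indicator (A - S) \<omega> * stopped \<tau> Y s \<omega> \<partial>Q)"
        by (rule Y_set_integral[OF \<open>0 \<le> s\<close> F_at_A_minus_S[OF order_refl], symmetric])
      finally show "(\<integral>\<omega>. indicator (A - S) \<omega> * stopped \<tau> Y t \<omega> \<partial>Q)
          = (\<integral>\<omega>. indicator (A - S) \<omega> * stopped \<tau> Y s \<omega> \<partial>Q)" .
    qed
  qed
qed

end

end

section \<open>Passing to an equivalent measure\<close>

lemma null_sets_equiv_measure: "equiv_measure Q P \<Longrightarrow> null_sets Q = null_sets P"
  unfolding equiv_measure_def null_sets_def by auto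

lemma AE_equiv_measure: "equiv_measure Q P \<Longrightarrow> (AE \<omega> in P. R \<omega>) \<Longrightarrow> (AE \<omega> in Q. R \<omega>)"
  unfolding eventually_ae_filter using null_sets_equiv_measure[of Q P]
  by (auto simp: equiv_measure_def)

lemma localizing_seq_equiv_measure:
  assumes "equiv_measure Q P" "localizing_seq P F \<tau>"
  shows "localizing_seq Q F \<tau>"
proof -
  have "AE \<omega> in P. mono (\<lambda>n. \<tau> n \<omega>) \<and> (\<lambda>n. \<tau> n \<omega>) \<longlonglongrightarrow> \<infinity>"
    using assms(2) unfolding localizing_seq_def by blast
  then show ?thesis
    using assms(2) AE_equiv_measure[OF assms(1)] unfolding localizing_seq_def by blast
qed

lemma filtered_prob_space_usual_conditions:
  assumes "equiv_measure Q P" "usual_conditions P F"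
  shows "filtered_prob_space Q F"
proof -
  have "is_filtration P F" using assms(2) unfolding usual_conditions_def by blast
  with assms(1) show ?thesis
    by (intro filtered_prob_space.intro filtered_prob_space_axioms.intro)
      (auto simp: equiv_measure_def is_filtration_def subalgebra_def)
qed

lemma usual_conditions_null_subsets:
  assumes "equiv_measure Q P" "usual_conditions P F" "N \<in> null_sets Q" "B \<subseteq> N"
  shows "B \<in> sets (F 0)"
proof -
  have "\<forall>A\<in>sets P. emeasure P A = 0 \<longrightarrow> (\<forall>B. B \<subseteq> A \<longrightarrow> B \<in> sets (F 0))"
    using assms(2) unfolding usual_conditions_def by blast
  moreover have "N \<in> sets P" "emeasure P N = 0"
    using assms(3) unfolding null_sets_equiv_measure[OF assms(1)] by auto
  ultimately show ?thesis using assms(4) by blast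
qed

lemma is_stopping_time_sub_filtration:
  assumes "filtered_prob_space Q F" "filtered_prob_space Q G" "sub_filtration F G" "is_stopping_time F \<tau>"
  shows "is_stopping_time G \<tau>"
  using assms filtered_prob_space.space_filtration[OF assms(1)] filtered_prob_space.space_filtration[OF assms(2)]
  unfolding is_stopping_time_def sub_filtration_def by auto

theorem mainTheorem1:
  fixes P :: "'a measure"
    and F G :: "real \<Rightarrow> 'a measure"
    and X :: "real \<Rightarrow> 'a \<Rightarrow> real"
    and \<tau> :: "nat \<Rightarrow> 'a \<Rightarrow> ennreal"
  assumes "prob_space P"
    and "usual_conditions P F" and "usual_conditions P G" and "sub_filtration F G"
    and "\<forall>t\<ge>0. \<forall>\<omega>\<in>space P. X t \<omega> > 0"
    and "cadlag P X"
    and "local_martingale P G X"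
    and "localizing_seq P F \<tau>"
    and "\<forall>n. martingale P G (stopped (\<tau> n) X) \<and> bounded_process P (stopped (\<tau> n) X)"
  shows "\<forall>Q. equiv_measure Q P \<longrightarrow> local_martingale Q G X \<longrightarrow>
           (\<forall>Y. optional_projection Q F X Y \<longrightarrow> local_martingale Q F Y)"
proof (intro allI impI)
  fix Q Y
  assume Q: "equiv_measure Q P" and X_Q: "local_martingale Q G X" and proj: "optional_projection Q F X Y"
  have QF: "filtered_prob_space Q F" and QG: "filtered_prob_space Q G"
    using filtered_prob_space_usual_conditions[OF Q] assms(2,3) by blast+
  note null = usual_conditions_null_subsets[OF Q assms(2)]
  have \<tau>_Q: "localizing_seq Q F \<tau>" by (rule localizing_seq_equiv_measure[OF Q assms(8)])
  then have \<tau>_F: "is_stopping_time F (\<tau> n)" for n unfolding localizing_seq_def by blast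
  have X_mart: "martingale Q G (stopped (\<tau> n) X)" for n
  proof (rule filtered_prob_space.martingale_stopped_local_martingale_bounded[OF QG X_Q])
    have space_Q: "space Q = space P" using Q unfolding equiv_measure_def by blast
    then show "0 \<le> X t \<omega>" if "0 \<le> t" "\<omega> \<in> space Q" for t \<omega>
      using assms(5) that by (simp add: less_imp_le)
    have "martingale P G (stopped (\<tau> n) X)" "bounded_process P (stopped (\<tau> n) X)"
      using assms(9) by blast+
    then show "adapted G (stopped (\<tau> n) X)" "bounded_process Q (stopped (\<tau> n) X)"
      unfolding martingale_def bounded_process_def space_Q by blast+
    show "is_stopping_time G (\<tau> n)" by (rule is_stopping_time_sub_filtration[OF QF QG assms(4) \<tau>_F])
  qed
  show "local_martingale Q F Y"
    unfolding local_martingale_def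
  proof (intro conjI exI[of _ \<tau>] allI)
    show "cadlag Q Y" using proj unfolding optional_projection_def by blast
    show "adapted F Y" by (rule filtered_prob_space.adapted_optional_projection[OF QF null proj])
    show "martingale Q F (stopped (\<tau> n) Y)" for n
      by (rule filtered_prob_space.martingale_stopped_optional_projection[OF QF null proj QG assms(4)
            \<tau>_F X_mart])
  qed (rule \<tau>_Q)
qed

end
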